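(* Let $\Gamma\subseteq[0,1]$ be a set which satisfies the DCC. Then there exist real numbers $\epsilon,\delta\in(0,1]$ such that $$\{\textstyle\sum_i n_ib_i'-1>0\mid b_i'\in\Gamma_\epsilon\cap[0,1],\ n_i\in\mathbb{Z}_{\ge0}\}\subseteq[\delta,+\infty),$$ where $\Gamma_\epsilon:=\bigcup_{b\in\Gamma}[b-\epsilon,b]$.
   Context: A set $\Gamma\subseteq\mathbb{R}$ satisfies the descending chain condition (DCC) if every non-increasing sequence in $\Gamma$ stabilizes. Sums $\sum_i n_ib_i'$ are finite sums. *)

theory Defs
  imports Complex_Main
begin

definition dcc :: "real set \<Rightarrow> bool" where
  "dcc \<Gamma> \<longleftrightarrow> (\<forall>a :: nat \<Rightarrow> real. (\<forall>i. a i \<in> \<Gamma>) \<longrightarrow> (\<forall>i. a (Suc i) \<le> a i)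
      \<longrightarrow> (\<exists>N. \<forall>m\<ge>N. a m = a N))"

definition Gamma_eps :: "real set \<Rightarrow> real \<Rightarrow> real set" where
  "Gamma_eps \<Gamma> \<epsilon> = (\<Union>b\<in>\<Gamma>. {b - \<epsilon>..b})"

end

(*
  The positive elements of a DCC set \<Gamma> are bounded below by some g > 0, and the
  M-fold sumset of \<Gamma> \<union> {0} again satisfies the DCC, so it has a gap (1, 1 + d)
  above 1; take M \<ge> 4 / g. Rounding each b\<^sub>i' \<in> \<Gamma>\<^sub>\<epsilon> up to some c\<^sub>i \<in> \<Gamma> with
  (1 - \<epsilon>/g) c\<^sub>i \<le> b\<^sub>i' turns a sum S = \<Sigma> n\<^sub>i b\<^sub>i' \<in> (1, 2) into a sum T \<ge> S with
  (1 - \<epsilon>/g) T \<le> S. Then T \<le> 4, so T has at most M nonzero summands, all in \<Gamma>;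
  hence T \<ge> 1 + d and S \<ge> 1 + d/2 as soon as \<epsilon>/g \<le> d/8.
*)
theory Submission
  imports Defs "HOL-Library.Set_Algebras"
begin

lemma dccD:
  assumes "dcc A" "\<And>i. a i \<in> A" "\<And>i. a (Suc i) \<le> a i"
  shows "\<exists>N. \<forall>m\<ge>N. a m = a N"
  using assms unfolding dcc_def by blast

lemma dcc_wf_less: "dcc S \<Longrightarrow> wf {(x, y). x \<in> S \<and> y \<in> S \<and> x < y}"
  unfolding wf_iff_no_infinite_down_chain
proof clarify
  fix f assume "dcc S" and chain: "\<forall>i. (f (Suc i), f i) \<in> {(x, y). x \<in> S \<and> y \<in> S \<and> x < y}"
  then have in_S: "f i \<in> S" and decr: "f (Suc i) < f i" for i
    by simp_all
  obtain N where N: "\<forall>m\<ge>N. f m = f N"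
    using dccD[of S f] \<open>dcc S\<close> in_S decr less_imp_le by blast
  have "f (Suc N) = f N" using N le_SucI by blast
  with decr[of N] show False by simp
qed

lemma dcc_gap:
  assumes "dcc S"
  shows "\<exists>\<delta>>0. \<forall>s\<in>S. t < s \<longrightarrow> t + \<delta> \<le> s"
proof (cases "\<exists>s\<in>S. t < s")
  case True
  then obtain s0 where "s0 \<in> {s \<in> S. t < s}" by blast
  then obtain m where m: "m \<in> {s \<in> S. t < s}"
    and minimal: "\<And>s. (s, m) \<in> {(x, y). x \<in> S \<and> y \<in> S \<and> x < y} \<Longrightarrow> s \<notin> {s \<in> S. t < s}"
    by (rule wfE_min[OF dcc_wf_less[OF assms]]) iprover+
  have "m \<le> s" if "s \<in> S" "t < s" for s
    using minimal[of s] m that by force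
  then show ?thesis
    using m by (intro exI[of _ "m - t"]) auto
next
  case False
  then show ?thesis by (intro exI[of _ 1]) auto
qed

lemma dcc_tail:
  assumes "dcc A" "\<And>i. a (Suc i) \<le> a i" "\<And>m. j \<le> m \<Longrightarrow> a m \<in> A"
  shows "\<exists>N. \<forall>m\<ge>N. a m = a N"
proof -
  obtain N where N: "\<forall>m\<ge>N. a (m + j) = a (N + j)"
    using dccD[of A "\<lambda>i. a (i + j)"] assms by auto
  have "a m = a (N + j)" if "N + j \<le> m" for m
    using N[rule_format, of "m - j"] that by simp
  then show ?thesis by blast
qed

lemma dcc_insert:
  assumes "dcc A"
  shows "dcc (insert x A)"
  unfolding dcc_def
proof (intro allI impI)
  fix a assume a_in: "\<forall>i. a i \<in> insert x A" and noninc: "\<forall>i. a (Suc i) \<le> a i"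
  then have "decseq a" by (simp add: decseq_Suc_iff)
  show "\<exists>N. \<forall>m\<ge>N. a m = a N"
  proof (cases "\<exists>j. \<forall>m\<ge>j. a m \<noteq> x")
    case True
    then show ?thesis using dcc_tail[OF assms] a_in noninc by blast
  next
    case False
    then have x_later: "\<exists>m'\<ge>m. a m' = x" for m by blast
    then obtain N where "a N = x" by blast
    have "a m = x" if "N \<le> m" for m
    proof -
      obtain m' where "m \<le> m'" "a m' = x" using x_later by blast
      then show ?thesis
        using decseqD[OF \<open>decseq a\<close>] \<open>a N = x\<close> that by (metis order_antisym)
    qed
    then show ?thesis using \<open>a N = x\<close> by metis
  qed
qed

lemma dcc_imp_incseq_subseq:
  fixes x :: "nat \<Rightarrow> real"
  assumes "dcc A" "\<And>i. x i \<in> A"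
  shows "\<exists>r. strict_mono r \<and> incseq (x \<circ> r)"
proof -
  obtain r where r: "strict_mono r" "monoseq (x \<circ> r)"
    using seq_monosub[of x] by (auto simp: comp_def)
  show ?thesis
  proof (cases "incseq (x \<circ> r)")
    case False
    then have "decseq (x \<circ> r)" using r(2) monoseq_iff by blast
    moreover have "(x \<circ> r) i \<in> A" for i
      using assms(2) by simp
    ultimately obtain N where N: "\<forall>m\<ge>N. (x \<circ> r) m = (x \<circ> r) N"
      using dccD[OF assms(1)] decseq_SucD by blast
    have "strict_mono (\<lambda>n. r (n + N))"
      using r(1) by (simp add: strict_mono_def)
    moreover have "incseq (x \<circ> (\<lambda>n. r (n + N)))"
      unfolding incseq_def using N by (metis comp_apply le_add2 order_refl)
    ultimately show ?thesis by blast
  qed (use r in blast)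
qed

text \<open>Along a subsequence on which both summands are non-decreasing, a non-increasing
  sequence in A + B is constant.\<close>
lemma dcc_set_plus:
  assumes "dcc A" "dcc B"
  shows "dcc (A + B)"
  unfolding dcc_def
proof (intro allI impI)
  fix s assume s_in: "\<forall>i. s i \<in> A + B" and "\<forall>i. s (Suc i) \<le> s i"
  then have "decseq s" by (simp add: decseq_Suc_iff)
  from s_in have "\<forall>i. \<exists>a\<in>A. \<exists>b\<in>B. s i = a + b"
    by (simp add: set_plus_def)
  then obtain a b where ab: "\<And>i. a i \<in> A" "\<And>i. b i \<in> B" "\<And>i. s i = a i + b i"
    by metis
  obtain r1 where r1: "strict_mono r1" "incseq (a \<circ> r1)"
    using dcc_imp_incseq_subseq[OF assms(1), of a] ab(1) by auto
  obtain r2 where r2: "strict_mono r2" "incseq (b \<circ> r1 \<circ> r2)"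
    using dcc_imp_incseq_subseq[OF assms(2), of "b \<circ> r1"] ab(2) by auto
  define r where "r = r1 \<circ> r2"
  have "strict_mono r" unfolding r_def using r1(1) r2(1) by (rule strict_mono_o)
  have "incseq (a \<circ> r)"
    using r1(2) r2(1) unfolding r_def incseq_def by (simp add: strict_mono_less_eq)
  with r2(2) have "incseq (s \<circ> r)"
    unfolding r_def incseq_def ab(3) by (simp add: add_mono)
  moreover have "decseq (s \<circ> r)"
    using \<open>decseq s\<close> \<open>strict_mono r\<close> unfolding decseq_def by (simp add: strict_mono_less_eq)
  ultimately have const: "s (r m) = s (r 0)" for m
    using incseqD[of "s \<circ> r" 0 m] decseqD[of "s \<circ> r" 0 m] by simp
  have "s m = s (r 0)" if "r 0 \<le> m" for m
  proof (rule order_antisym)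
    show "s m \<le> s (r 0)" using decseqD[OF \<open>decseq s\<close> that] .
    have "s (r m) \<le> s m"
      using decseqD[OF \<open>decseq s\<close> strict_mono_imp_increasing[OF \<open>strict_mono r\<close>]] .
    then show "s (r 0) \<le> s m" using const[of m] by simp
  qed
  then show "\<exists>N. \<forall>m\<ge>N. s m = s N" by blast
qed

abbreviation iter_sumset :: "nat \<Rightarrow> 'a::comm_monoid_add set \<Rightarrow> 'a set" where
  "iter_sumset n A \<equiv> (\<Sum>(_::nat)<n. A)"

lemma iter_sumset_add: "iter_sumset m A + iter_sumset n A = iter_sumset (m + n) A"
  by (induction n) (simp_all flip: add.assoc)

lemma of_nat_mult_mem_iter_sumset:
  fixes x :: "'a::semiring_1"
  assumes "x \<in> A"
  shows "of_nat n * x \<in> iter_sumset n A"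
proof (induction n)
  case (Suc n)
  then have "of_nat n * x + x \<in> iter_sumset n A + A"
    using assms by (rule set_plus_intro)
  then show ?case by (simp add: distrib_right add.commute)
qed simp

lemma lincomb_mem_iter_sumset:
  fixes c :: "nat \<Rightarrow> 'a::semiring_1"
  shows "\<forall>i<k. c i \<in> A \<Longrightarrow> (\<Sum>i<k. of_nat (n i) * c i) \<in> iter_sumset (\<Sum>i<k. n i) A"
proof (induction k)
  case (Suc k)
  then have "(\<Sum>i<k. of_nat (n i) * c i) + of_nat (n k) * c k
      \<in> iter_sumset (\<Sum>i<k. n i) A + iter_sumset (n k) A"
    by (intro set_plus_intro of_nat_mult_mem_iter_sumset) auto
  then show ?case by (simp add: iter_sumset_add)
qed simp

lemma iter_sumset_mono:
  fixes A :: "'a::semiring_1 set"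
  assumes "0 \<in> A" "m \<le> n"
  shows "iter_sumset m A \<subseteq> iter_sumset n A"
proof -
  have "0 \<in> iter_sumset (n - m) A"
    using of_nat_mult_mem_iter_sumset[OF assms(1)] by (metis mult_zero_right)
  then have "iter_sumset m A \<subseteq> iter_sumset (n - m) A + iter_sumset m A"
    by (rule set_zero_plus2)
  also have "\<dots> = iter_sumset n A"
    using assms(2) by (simp add: iter_sumset_add)
  finally show ?thesis .
qed

lemma dcc_iter_sumset:
  assumes "dcc A"
  shows "dcc (iter_sumset n A)"
proof (induction n)
  case 0
  show ?case by (simp add: dcc_def)
next
  case (Suc n)
  then show ?case using dcc_set_plus[OF Suc assms] by simp
qed

text \<open>As c \<ge> g, the additive error \<epsilon> is at most the relative error (\<epsilon> / g) c.\<close>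
lemma Gamma_eps_round_up:
  assumes "0 < g" "\<And>c. c \<in> \<Gamma> \<Longrightarrow> 0 < c \<Longrightarrow> g \<le> c" "x \<in> Gamma_eps \<Gamma> \<epsilon>" "0 \<le> x"
  shows "\<exists>c\<in>\<Gamma>. (1 - \<epsilon> / g) * c \<le> x \<and> x \<le> c"
proof -
  obtain c where c: "c \<in> \<Gamma>" "c - \<epsilon> \<le> x" "x \<le> c"
    using assms(3) unfolding Gamma_eps_def by auto
  have "(1 - \<epsilon> / g) * c \<le> x"
  proof (cases "c = 0")
    case False
    then have "g \<le> c" using assms(2,4) c by auto
    moreover have "0 \<le> \<epsilon>" using c by linarith
    ultimately have "\<epsilon> \<le> \<epsilon> / g * c"
      using \<open>0 < g\<close> by (simp add: field_simps mult_left_mono)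
    then show ?thesis using c by (simp add: algebra_simps)
  qed (use assms(4) in simp)
  with c show ?thesis by blast
qed

lemma lincomb_Gamma_eps_round_up:
  fixes b :: "nat \<Rightarrow> real" and n :: "nat \<Rightarrow> nat"
  assumes "0 < g" "\<And>c. c \<in> \<Gamma> \<Longrightarrow> 0 < c \<Longrightarrow> g \<le> c"
    and "\<forall>i<k. b i \<in> Gamma_eps \<Gamma> \<epsilon> \<and> 0 \<le> b i"
  obtains c where "\<forall>i<k. c i \<in> \<Gamma>"
    "(1 - \<epsilon> / g) * (\<Sum>i<k. real (n i) * c i) \<le> (\<Sum>i<k. real (n i) * b i)"
    "(\<Sum>i<k. real (n i) * b i) \<le> (\<Sum>i<k. real (n i) * c i)"
proof -
  have "\<forall>i<k. \<exists>c\<in>\<Gamma>. (1 - \<epsilon> / g) * c \<le> b i \<and> b i \<le> c"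
    using Gamma_eps_round_up[OF assms(1,2)] assms(3) by blast
  then obtain c where c: "\<forall>i<k. c i \<in> \<Gamma> \<and> (1 - \<epsilon> / g) * c i \<le> b i \<and> b i \<le> c i"
    by metis
  have "(1 - \<epsilon> / g) * (\<Sum>i<k. real (n i) * c i) = (\<Sum>i<k. real (n i) * ((1 - \<epsilon> / g) * c i))"
    by (simp add: sum_distrib_left mult.left_commute)
  also have "\<dots> \<le> (\<Sum>i<k. real (n i) * b i)"
    using c by (intro sum_mono mult_left_mono) auto
  finally show thesis
    using c by (intro that) (auto intro!: sum_mono mult_left_mono)
qed

lemma lincomb_mem_iter_sumset_if_le:
  fixes c :: "nat \<Rightarrow> real" and n :: "nat \<Rightarrow> nat"
  assumes "0 \<in> A" "0 < g" "\<And>a. a \<in> A \<Longrightarrow> a = 0 \<or> g \<le> a" "\<forall>i<k. c i \<in> A"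
    and "(\<Sum>i<k. real (n i) * c i) \<le> g * real M"
  shows "(\<Sum>i<k. real (n i) * c i) \<in> iter_sumset M A"
proof -
  \<comment> \<open>the multiplicities of zero terms are unbounded, so drop them\<close>
  define m where "m i = (if c i = 0 then 0 else n i)" for i
  have same: "(\<Sum>i<k. real (n i) * c i) = (\<Sum>i<k. real (m i) * c i)"
    by (intro sum.cong) (auto simp: m_def)
  have "g * real (\<Sum>i<k. m i) = (\<Sum>i<k. real (m i) * g)"
    by (simp add: sum_distrib_left mult.commute)
  also have "\<dots> \<le> (\<Sum>i<k. real (m i) * c i)"
  proof (intro sum_mono)
    fix i assume "i \<in> {..<k}"
    then have "c i = 0 \<or> g \<le> c i" using assms(3,4) by blast
    then show "real (m i) * g \<le> real (m i) * c i"
      by (auto simp: m_def intro: mult_left_mono)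
  qed
  finally have "g * real (\<Sum>i<k. m i) \<le> g * real M"
    using assms(5) same by linarith
  then have "(\<Sum>i<k. m i) \<le> M"
    using assms(2) by (simp only: mult_le_cancel_left_pos of_nat_le_iff)
  then show ?thesis
    using same lincomb_mem_iter_sumset[OF assms(4)] iter_sumset_mono[OF assms(1)] by auto
qed

lemma lincomb_Gamma_eps_gap:
  fixes \<Gamma> :: "real set" and b :: "nat \<Rightarrow> real" and n :: "nat \<Rightarrow> nat"
  assumes nonneg: "\<Gamma> \<subseteq> {0..}" and g: "0 < g" "\<And>c. c \<in> \<Gamma> \<Longrightarrow> 0 < c \<Longrightarrow> g \<le> c"
    and gap: "\<forall>s\<in>iter_sumset M (insert 0 \<Gamma>). 1 < s \<longrightarrow> 1 + d \<le> s"
    and M: "4 \<le> g * real M" and \<epsilon>: "0 \<le> \<epsilon>" "2 * \<epsilon> \<le> g" "8 * \<epsilon> \<le> g * d"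
    and b: "\<forall>i<k. b i \<in> Gamma_eps \<Gamma> \<epsilon> \<and> 0 \<le> b i"
    and S_gt: "1 < (\<Sum>i<k. real (n i) * b i)"
  shows "min 2 (1 + d / 2) \<le> (\<Sum>i<k. real (n i) * b i)"
proof (cases "2 \<le> (\<Sum>i<k. real (n i) * b i)")
  case False
  define S where "S = (\<Sum>i<k. real (n i) * b i)"
  define \<theta> where "\<theta> = \<epsilon> / g"
  obtain c where c: "\<forall>i<k. c i \<in> \<Gamma>"
    and below: "(1 - \<theta>) * (\<Sum>i<k. real (n i) * c i) \<le> S"
    and above: "S \<le> (\<Sum>i<k. real (n i) * c i)"
    using lincomb_Gamma_eps_round_up[OF g b] unfolding S_def \<theta>_def by blast
  define T where "T = (\<Sum>i<k. real (n i) * c i)"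
  have \<theta>: "0 \<le> \<theta>" "\<theta> \<le> 1 / 2" "8 * \<theta> \<le> d"
    using \<epsilon> g by (simp_all add: \<theta>_def field_simps)
  have "1 / 2 * T \<le> (1 - \<theta>) * T"
    using \<theta>(2) above S_gt unfolding S_def T_def by (intro mult_right_mono) auto
  then have "T \<le> 4"
    using below False unfolding S_def T_def by linarith
  have "T \<in> iter_sumset M (insert 0 \<Gamma>)"
    unfolding T_def
  proof (rule lincomb_mem_iter_sumset_if_le[OF _ g(1)])
    show "a = 0 \<or> g \<le> a" if "a \<in> insert 0 \<Gamma>" for a
      using that nonneg g(2) by force
    show "(\<Sum>i<k. real (n i) * c i) \<le> g * real M"
      using \<open>T \<le> 4\<close> M unfolding T_def by linarith
  qed (use c in auto)
  moreover have "1 < T"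
    using above S_gt unfolding S_def T_def by linarith
  ultimately have "1 + d \<le> T"
    using gap by blast
  moreover have "\<theta> * T \<le> \<theta> * 4"
    using \<open>T \<le> 4\<close> \<theta>(1) by (rule mult_left_mono)
  ultimately show ?thesis
    using below \<theta>(3) unfolding S_def T_def by (simp add: algebra_simps)
qed simp

theorem lemma3p4:
  fixes \<Gamma> :: "real set"
  assumes "\<Gamma> \<subseteq> {0..1}" and "dcc \<Gamma>"
  shows "\<exists>\<epsilon> \<delta>. \<epsilon> \<in> {0<..1} \<and> \<delta> \<in> {0<..1} \<and>
    (\<forall>(k::nat) (b :: nat \<Rightarrow> real) (n :: nat \<Rightarrow> nat).
       (\<forall>i<k. b i \<in> Gamma_eps \<Gamma> \<epsilon> \<inter> {0..1}) \<longrightarrow>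
       (\<Sum>i<k. real (n i) * b i) - 1 > 0 \<longrightarrow>
       (\<Sum>i<k. real (n i) * b i) - 1 \<in> {\<delta>..})"
proof -
  obtain g0 where "0 < g0" "\<forall>c\<in>\<Gamma>. 0 < c \<longrightarrow> 0 + g0 \<le> c"
    using dcc_gap[OF assms(2)] by blast
  then obtain g where g: "0 < g" "g \<le> 1" "\<And>c. c \<in> \<Gamma> \<Longrightarrow> 0 < c \<Longrightarrow> g \<le> c"
    by (intro that[of "min g0 1"]) auto
  define M where "M = nat \<lceil>4 / g\<rceil>"
  have "4 / g \<le> real M"
    unfolding M_def by (rule real_nat_ceiling_ge)
  then have M: "4 \<le> g * real M"
    using g(1) by (simp add: field_simps)
  obtain d where d: "0 < d" "\<forall>s\<in>iter_sumset M (insert 0 \<Gamma>). 1 < s \<longrightarrow> 1 + d \<le> s"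
    using dcc_gap[OF dcc_iter_sumset[OF dcc_insert[OF assms(2)]]] by blast
  define \<epsilon> where "\<epsilon> = g * min (1 / 2) (d / 8)"
  have \<epsilon>: "0 < \<epsilon>" "2 * \<epsilon> \<le> g" "8 * \<epsilon> \<le> g * d"
    using g(1) d(1) unfolding \<epsilon>_def by (auto simp: min_def)
  show ?thesis
  proof (rule exI[of _ \<epsilon>], rule exI[of _ "min 1 (d / 2)"], intro conjI allI impI)
    fix k :: nat and b :: "nat \<Rightarrow> real" and n :: "nat \<Rightarrow> nat"
    assume b: "\<forall>i<k. b i \<in> Gamma_eps \<Gamma> \<epsilon> \<inter> {0..1}"
      and S: "(\<Sum>i<k. real (n i) * b i) - 1 > 0"
    have "\<Gamma> \<subseteq> {0..}" "\<forall>i<k. b i \<in> Gamma_eps \<Gamma> \<epsilon> \<and> 0 \<le> b i" "1 < (\<Sum>i<k. real (n i) * b i)"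
      using assms(1) b S by auto
    from lincomb_Gamma_eps_gap[OF this(1) g(1,3) d(2) M less_imp_le[OF \<epsilon>(1)] \<epsilon>(2,3) this(2,3)]
    show "(\<Sum>i<k. real (n i) * b i) - 1 \<in> {min 1 (d / 2)..}" by auto
  qed (use \<epsilon> g d in auto)
qed

end
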